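(* Let $\alpha=(\alpha_1,\ldots,\alpha_n)$ be a composition, and suppose there is $1\le r\le n-1$ with $\alpha_r<\alpha_{r+1}$. Let $w\in S_n$ be a permutation in which the value $r$ appears before the value $r+1$. Then \[x(w)=x(s_rw)\cdot s_r.\]
   Context: A composition is a sequence of $n$ nonnegative integers. The skyline diagram $D(\alpha)$ is the set of boxes $(i,j)$ (row $i$, column $j$, rows numbered top to bottom) with $1\le j\le\alpha_i$. For $w=w_1\cdots w_n\in S_n$, the filling $\mathcal{F}_w(D(\alpha))$ is defined column by column: for each column $j$, for $k=1,\ldots,n$ in turn, place $w_k$ into the topmost still-empty box of column $j$ of $D(\alpha)$ whose row index is $\ge w_k$, skipping $w_k$ if no such box exists. Then $x(w)=(x_1,\ldots,x_n)$, where $x_k$ is the number of appearances of $k$ in $\mathcal{F}_w(D(\alpha))$. Here $s_rw$ is the permutation obtained from $w$ by interchanging the values $r$ and $r+1$, and for $v\in\mathbb{R}^n$, $v\cdot s_r$ is $v$ with its $r$-th and $(r+1)$-th entries swapped. *)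

theory Defs
  imports Main
begin

text \<open>A composition alpha = (alpha_1,...,alpha_n) is a list of naturals of length n;
 alpha_i = alpha ! (i - 1). Rows and columns are numbered from 1.
 A permutation w in S_n is given in one-line notation as a list w_1 ... w_n
 (w_k = w ! (k - 1)) that is a rearrangement of 1..n.\<close>

definition is_perm :: "nat \<Rightarrow> nat list \<Rightarrow> bool" where
  "is_perm n w \<longleftrightarrow> length w = n \<and> distinct w \<and> set w = {1..n}"

definition in_diagram :: "nat list \<Rightarrow> nat \<Rightarrow> nat \<Rightarrow> bool" where
  "in_diagram alpha i j \<longleftrightarrow> 1 \<le> i \<and> i \<le> length alpha \<and> 1 \<le> j \<and> j \<le> alpha ! (i - 1)"

definition place :: "nat list \<Rightarrow> nat \<Rightarrow> nat \<Rightarrow> (nat \<Rightarrow> nat option) \<Rightarrow> (nat \<Rightarrow> nat option)" where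
  "place alpha j v F =
    (let S = {i. v \<le> i \<and> in_diagram alpha i j \<and> F i = None}
     in if S = {} then F else F(Min S := Some v))"

definition fill_column :: "nat list \<Rightarrow> nat list \<Rightarrow> nat \<Rightarrow> (nat \<Rightarrow> nat option)" where
  "fill_column alpha w j = fold (place alpha j) w (\<lambda>_. None)"

definition filling :: "nat list \<Rightarrow> nat list \<Rightarrow> nat \<Rightarrow> nat \<Rightarrow> nat option" where
  "filling alpha w i j = fill_column alpha w j i"

definition xvec :: "nat list \<Rightarrow> nat list \<Rightarrow> nat list" where
  "xvec alpha w = map (\<lambda>k. card {(i, j). in_diagram alpha i j \<and> filling alpha w i j = Some k})
                      [1..<length alpha + 1]"

definition swap_values :: "nat \<Rightarrow> nat list \<Rightarrow> nat list" where
  "swap_values r w = map (\<lambda>v. if v = r then r + 1 else if v = r + 1 then r else v) w"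

definition swap_entries :: "nat list \<Rightarrow> nat \<Rightarrow> nat list" where
  "swap_entries v r = v[r - 1 := v ! r, r := v ! (r - 1)]"

end

theory Submission
  imports Defs "HOL-Combinatorics.Transposition"
begin

text \<open>Fix a column j and run the column insertion for w and for w' = s_r w side by side.
  They coincide until r is reached. If box (r, j) is then absent or already filled, every value v
  of w and the corresponding value s_r(v) of w' land in the same box. Otherwise box (r + 1, j)
  exists too, because alpha_r < alpha_(r+1), and both boxes are empty: w puts r into row r and w'
  puts r + 1 into row r + 1. The two fillings keep differing only there until a value v < r drops
  into row r + 1 of the one and row r of the other, or until the second of r, r + 1 arrives; from
  then on they agree after exchanging rows r and r + 1 and entries r and r + 1. Hence in every
  column the filling of w' is that of w with entries r, r + 1 exchanged and rows permuted by a
  diagram-preserving involution, and counting entries gives x_k(w) = x_(s_r k)(w').\<close>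

lemma swap_values_eq_map_transpose: "swap_values r w = map (transpose r (Suc r)) w"
  by (simp add: swap_values_def transpose_def)

lemma length_swap_entries [simp]: "length (swap_entries v r) = length v"
  by (simp add: swap_entries_def)

lemma nth_swap_entries:
  assumes "1 \<le> r" "r < length v" "i < length v"
  shows "swap_entries v r ! i = v ! transpose (r - 1) r i"
  using assms by (auto simp: swap_entries_def nth_list_update transpose_def)

lemma length_xvec [simp]: "length (xvec alpha w) = length alpha"
  by (simp add: xvec_def del: upt_Suc)

lemma nth_xvec:
  "k < length alpha \<Longrightarrow>
   xvec alpha w ! k = card {(i, j). in_diagram alpha i j \<and> filling alpha w i j = Some (Suc k)}"
  by (simp add: xvec_def del: upt_Suc)

lemma split_list_at_two:
  assumes "a < b" "b < length w"
  obtains p q t where "w = p @ w ! a # q @ w ! b # t"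
proof -
  have "w ! a \<in> set (take b w)"
    using assms by (auto simp: in_set_conv_nth intro: exI[of _ a])
  then obtain p q where "take b w = p @ w ! a # q"
    by (meson split_list)
  moreover have "w = take b w @ w ! b # drop (Suc b) w"
    using assms(2) by (rule id_take_nth_drop)
  ultimately show thesis
    by (intro that[of p q "drop (Suc b) w"]) simp
qed

lemma le_transpose_Suc_iff: "i \<noteq> r \<Longrightarrow> transpose r (Suc r) v \<le> i \<longleftrightarrow> v \<le> i"
  by (auto simp: transpose_def)

lemma map_transpose_eq_self: "a \<notin> set l \<Longrightarrow> b \<notin> set l \<Longrightarrow> map (transpose a b) l = l"
  by (rule map_idI) (metis transpose_apply_other)

text \<open>F' arises from F by moving rows with the involution \<sigma> and exchanging the entries r and
  r + 1. As \<sigma> moves only filled boxes and box (r, j) is filled whenever present, a value v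
  inserted into F and s_r(v) inserted into F' land in corresponding boxes.\<close>

definition swap_related ::
    "nat list \<Rightarrow> nat \<Rightarrow> nat \<Rightarrow> (nat \<Rightarrow> nat) \<Rightarrow> (nat \<Rightarrow> nat option) \<Rightarrow> (nat \<Rightarrow> nat option) \<Rightarrow> bool" where
  "swap_related alpha j r \<sigma> F F' \<longleftrightarrow>
     (\<forall>i. \<sigma> (\<sigma> i) = i) \<and>
     (\<forall>i. F' (\<sigma> i) = map_option (transpose r (Suc r)) (F i)) \<and>
     (in_diagram alpha r j \<longrightarrow> F r \<noteq> None) \<and>
     (\<forall>i. \<sigma> i \<noteq> i \<longrightarrow> in_diagram alpha i j \<and> F i \<noteq> None)"

text \<open>The column state right after w has put r into row r and s_r w has put r + 1 into
  row r + 1.\<close>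

definition awaiting_swap :: "nat \<Rightarrow> (nat \<Rightarrow> nat option) \<Rightarrow> (nat \<Rightarrow> nat option) \<Rightarrow> bool" where
  "awaiting_swap r F F' \<longleftrightarrow>
     F r = Some r \<and> F (Suc r) = None \<and> F' r = None \<and> F' (Suc r) = Some (Suc r) \<and>
     (\<forall>i. i \<noteq> r \<and> i \<noteq> Suc r \<longrightarrow> F' i = F i \<and> map_option (transpose r (Suc r)) (F i) = F i)"

context
  fixes alpha :: "nat list" and j :: nat
begin

lemma finite_free_boxes: "finite {i. v \<le> i \<and> in_diagram alpha i j \<and> F i = None}"
  by (rule finite_subset[of _ "{..length alpha}"]) (auto simp: in_diagram_def)

lemma place_cases:
  obtains (blocked) "\<forall>i. v \<le> i \<longrightarrow> in_diagram alpha i j \<longrightarrow> F i \<noteq> None" "place alpha j v F = F"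
  | (into) m where "v \<le> m" "in_diagram alpha m j" "F m = None"
     "\<forall>i. v \<le> i \<longrightarrow> in_diagram alpha i j \<longrightarrow> F i = None \<longrightarrow> m \<le> i"
     "place alpha j v F = F(m := Some v)"
proof (cases "{i. v \<le> i \<and> in_diagram alpha i j \<and> F i = None} = {}")
  case True
  then show ?thesis by (intro blocked) (auto simp: place_def)
next
  case False
  let ?S = "{i. v \<le> i \<and> in_diagram alpha i j \<and> F i = None}"
  have "Min ?S \<in> ?S" "\<forall>i\<in>?S. Min ?S \<le> i"
    using Min_in[OF finite_free_boxes False] Min_le[OF finite_free_boxes] by auto
  with False show ?thesis by (intro into[of "Min ?S"]) (auto simp: place_def)
qed

lemma place_eq_update:
  assumes "v \<le> m" "in_diagram alpha m j" "F m = None"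
    and "\<forall>i. v \<le> i \<longrightarrow> in_diagram alpha i j \<longrightarrow> F i = None \<longrightarrow> m \<le> i"
  shows "place alpha j v F = F(m := Some v)"
proof -
  let ?S = "{i. v \<le> i \<and> in_diagram alpha i j \<and> F i = None}"
  have "Min ?S = m"
    by (rule Min_eqI[OF finite_free_boxes]) (use assms in auto)
  moreover have "?S \<noteq> {}"
    using assms by auto
  ultimately show ?thesis
    unfolding place_def Let_def by (simp only: if_False)
qed

lemma place_eq_self:
  "\<forall>i. v \<le> i \<longrightarrow> in_diagram alpha i j \<longrightarrow> F i \<noteq> None \<Longrightarrow> place alpha j v F = F"
  by (auto simp: place_def)

lemma fold_place_entries: "fold (place alpha j) l F i = F i \<or> fold (place alpha j) l F i \<in> Some ` set l"
proof (induction l arbitrary: F)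
  case (Cons v l)
  have "place alpha j v F i = F i \<or> place alpha j v F i = Some v"
    by (cases rule: place_cases[of v F]) auto
  with Cons.IH[of "place alpha j v F"] show ?case
    by auto
qed simp

lemma swap_related_free_box:
  assumes rel: "swap_related alpha j r \<sigma> F F'" and "in_diagram alpha i j" "F' i = None"
  shows "\<sigma> i = i" "F i = None" "i \<noteq> r"
proof -
  have "F' i = map_option (transpose r (Suc r)) (F (\<sigma> i))"
    using rel unfolding swap_related_def by metis
  with \<open>F' i = None\<close> have "F (\<sigma> i) = None"
    by simp
  with rel show "\<sigma> i = i"
    unfolding swap_related_def by metis
  with \<open>F (\<sigma> i) = None\<close> show "F i = None"
    by simp
  with rel \<open>in_diagram alpha i j\<close> show "i \<noteq> r"
    by (auto simp: swap_related_def)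
qed

lemma swap_related_in_diagram_iff:
  "swap_related alpha j r \<sigma> F F' \<Longrightarrow> in_diagram alpha (\<sigma> i) j \<longleftrightarrow> in_diagram alpha i j"
  unfolding swap_related_def by metis

lemma swap_related_place:
  assumes rel: "swap_related alpha j r \<sigma> F F'"
  shows "swap_related alpha j r \<sigma> (place alpha j v F) (place alpha j (transpose r (Suc r) v) F')"
proof (cases rule: place_cases[of v F])
  case blocked
  have "place alpha j (transpose r (Suc r) v) F' = F'"
  proof (rule place_eq_self, intro allI impI notI)
    fix i assume i: "transpose r (Suc r) v \<le> i" "in_diagram alpha i j" "F' i = None"
    with swap_related_free_box[OF rel i(2,3)] blocked show False
      by (auto simp: le_transpose_Suc_iff)
  qed
  with blocked rel show ?thesis by simp
next
  case (into m)
  have m: "\<sigma> m = m" "m \<noteq> r"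
    using into rel by (auto simp: swap_related_def)
  moreover have "F' (\<sigma> m) = map_option (transpose r (Suc r)) (F m)"
    using rel by (simp add: swap_related_def)
  ultimately have "F' m = None"
    using into by simp
  have "place alpha j (transpose r (Suc r) v) F' = F'(m := Some (transpose r (Suc r) v))"
  proof (rule place_eq_update)
    show "transpose r (Suc r) v \<le> m"
      using into m by (simp add: le_transpose_Suc_iff)
    show "\<forall>i. transpose r (Suc r) v \<le> i \<longrightarrow> in_diagram alpha i j \<longrightarrow> F' i = None \<longrightarrow> m \<le> i"
      using into swap_related_free_box[OF rel] by (auto simp: le_transpose_Suc_iff)
  qed (use into \<open>F' m = None\<close> in auto)
  moreover have "\<sigma> i = m \<longleftrightarrow> i = m" for i
    using rel m unfolding swap_related_def by metis
  ultimately show ?thesis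
    using into rel by (auto simp: swap_related_def)
qed

lemma swap_related_fold:
  "swap_related alpha j r \<sigma> F F' \<Longrightarrow>
   swap_related alpha j r \<sigma> (fold (place alpha j) l F) (fold (place alpha j) (map (transpose r (Suc r)) l) F')"
  by (induction l arbitrary: F F') (simp_all add: swap_related_place)

lemma awaiting_swap_place:
  assumes aw: "awaiting_swap r F F'" and v: "v \<noteq> r" "v \<noteq> Suc r"
    and rows: "in_diagram alpha r j" "in_diagram alpha (Suc r) j"
  shows "awaiting_swap r (place alpha j v F) (place alpha j v F') \<or>
    swap_related alpha j r (transpose r (Suc r)) (place alpha j v F) (place alpha j v F')"
proof (cases rule: place_cases[of v F])
  case blocked
  then have "\<not> v \<le> Suc r"
    using aw rows(2) by (auto simp: awaiting_swap_def)
  with aw blocked have "place alpha j v F' = F'"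
    by (intro place_eq_self) (auto simp: awaiting_swap_def)
  with aw blocked show ?thesis by simp
next
  case (into m)
  have "m \<noteq> r"
    using into aw by (auto simp: awaiting_swap_def)
  show ?thesis
  proof (cases "m = Suc r")
    case True
    \<comment> \<open>v falls into row r + 1 of F, and into the still empty row r of F'\<close>
    have "place alpha j v F' = F'(r := Some v)"
    proof (rule place_eq_update)
      show "\<forall>i. v \<le> i \<longrightarrow> in_diagram alpha i j \<longrightarrow> F' i = None \<longrightarrow> r \<le> i"
        using into True aw by (force simp: awaiting_swap_def)
    qed (use into True v aw rows in \<open>auto simp: awaiting_swap_def\<close>)
    moreover have "swap_related alpha j r (transpose r (Suc r)) (F(Suc r := Some v)) (F'(r := Some v))"
      using aw v rows by (auto simp: swap_related_def awaiting_swap_def transpose_def)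
    ultimately show ?thesis
      using into True by simp
  next
    case False
    have "place alpha j v F' = F'(m := Some v)"
    proof (rule place_eq_update)
      show "\<forall>i. v \<le> i \<longrightarrow> in_diagram alpha i j \<longrightarrow> F' i = None \<longrightarrow> m \<le> i"
      proof (intro allI impI)
        fix i assume i: "v \<le> i" "in_diagram alpha i j" "F' i = None"
        show "m \<le> i"
        proof (cases "i = r")
          case True
          with into(4) i(1) aw rows(2) have "m \<le> Suc r"
            by (auto simp: awaiting_swap_def)
          with True \<open>m \<noteq> r\<close> \<open>m \<noteq> Suc r\<close> show ?thesis
            by simp
        next
          case False
          with i aw into(4) show ?thesis
            by (cases "i = Suc r") (auto simp: awaiting_swap_def)
        qed
      qed
    qed (use into False \<open>m \<noteq> r\<close> aw in \<open>auto simp: awaiting_swap_def\<close>)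
    moreover have "awaiting_swap r (F(m := Some v)) (F'(m := Some v))"
      using aw v \<open>m \<noteq> r\<close> False by (auto simp: awaiting_swap_def)
    ultimately show ?thesis
      using into by simp
  qed
qed

lemma awaiting_swap_fold:
  assumes "awaiting_swap r F F'" "r \<notin> set l" "Suc r \<notin> set l"
    and rows: "in_diagram alpha r j" "in_diagram alpha (Suc r) j"
  shows "awaiting_swap r (fold (place alpha j) l F) (fold (place alpha j) l F') \<or>
    swap_related alpha j r (transpose r (Suc r)) (fold (place alpha j) l F) (fold (place alpha j) l F')"
  using assms(1-3)
proof (induction l arbitrary: F F')
  case (Cons v l)
  from awaiting_swap_place[OF Cons.prems(1) _ _ rows, of v] Cons.prems(2,3)
  consider "awaiting_swap r (place alpha j v F) (place alpha j v F')"
    | "swap_related alpha j r (transpose r (Suc r)) (place alpha j v F) (place alpha j v F')"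
    by auto
  then show ?case
  proof cases
    case 1
    with Cons show ?thesis by simp
  next
    case 2
    with swap_related_fold[OF 2, of l] Cons.prems(2,3) show ?thesis
      by (simp add: map_transpose_eq_self)
  qed
qed simp

lemma awaiting_swap_resolve:
  assumes aw: "awaiting_swap r F F'" and rows: "in_diagram alpha r j" "in_diagram alpha (Suc r) j"
  shows "swap_related alpha j r (transpose r (Suc r)) (place alpha j (Suc r) F) (place alpha j r F')"
proof -
  have "place alpha j (Suc r) F = F(Suc r := Some (Suc r))"
    by (rule place_eq_update) (use aw rows in \<open>auto simp: awaiting_swap_def\<close>)
  moreover have "place alpha j r F' = F'(r := Some r)"
    by (rule place_eq_update) (use aw rows in \<open>auto simp: awaiting_swap_def\<close>)
  moreover have "swap_related alpha j r (transpose r (Suc r)) (F(Suc r := Some (Suc r))) (F'(r := Some r))"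
    using aw rows by (auto simp: swap_related_def awaiting_swap_def transpose_def)
  ultimately show ?thesis by simp
qed

lemma fold_place_succ_row_empty:
  assumes "in_diagram alpha r j" "Suc r \<notin> set l" "F r = None \<longrightarrow> F (Suc r) = None"
  shows "fold (place alpha j) l F r = None \<longrightarrow> fold (place alpha j) l F (Suc r) = None"
  using assms(2,3)
proof (induction l arbitrary: F)
  case (Cons v l)
  have "place alpha j v F r = None \<longrightarrow> place alpha j v F (Suc r) = None"
  proof (cases rule: place_cases[of v F])
    case (into m)
    show ?thesis
    proof
      assume "place alpha j v F r = None"
      with into have "m \<noteq> r" "F r = None"
        by (auto split: if_splits)
      moreover have "m \<noteq> Suc r"
      proof
        assume "m = Suc r"
        with into Cons.prems(1) have "v \<le> r"
          by auto
        with into(4) \<open>F r = None\<close> assms(1) have "m \<le> r"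
          by blast
        with \<open>m = Suc r\<close> show False
          by simp
      qed
      ultimately show "place alpha j v F (Suc r) = None"
        using into Cons.prems(2) by simp
    qed
  qed (use Cons.prems in simp)
  with Cons show ?case by simp
qed simp

lemma swap_related_fold_pair:
  assumes rows: "in_diagram alpha r j" "in_diagram alpha (Suc r) j"
    and empty: "F r = None" "F (Suc r) = None"
    and fixed: "\<And>i. map_option (transpose r (Suc r)) (F i) = F i"
    and "r \<notin> set q" "Suc r \<notin> set q"
  shows "swap_related alpha j r (transpose r (Suc r))
    (fold (place alpha j) (r # q @ [Suc r]) F) (fold (place alpha j) (Suc r # q @ [r]) F)"
proof -
  have "awaiting_swap r (place alpha j r F) (place alpha j (Suc r) F)"
    using rows empty fixed
    by (simp add: awaiting_swap_def place_eq_update[where m = r] place_eq_update[where m = "Suc r"])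
  with awaiting_swap_fold[OF _ \<open>r \<notin> set q\<close> \<open>Suc r \<notin> set q\<close> rows]
  consider (pending) "awaiting_swap r (fold (place alpha j) q (place alpha j r F))
      (fold (place alpha j) q (place alpha j (Suc r) F))"
    | (resolved) "swap_related alpha j r (transpose r (Suc r))
      (fold (place alpha j) q (place alpha j r F)) (fold (place alpha j) q (place alpha j (Suc r) F))"
    by blast
  then show ?thesis
  proof cases
    case pending
    with rows show ?thesis
      by (simp add: awaiting_swap_resolve)
  next
    case resolved
    from swap_related_place[OF this, of "Suc r"] show ?thesis
      by simp
  qed
qed

lemma fill_column_swap_related:
  assumes w: "w = p @ r # q @ Suc r # t" and "distinct w"
    and rows: "in_diagram alpha r j \<Longrightarrow> in_diagram alpha (Suc r) j"
  obtains \<sigma> where "swap_related alpha j r \<sigma>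
    (fill_column alpha w j) (fill_column alpha (map (transpose r (Suc r)) w) j)"
proof -
  have avoid: "r \<notin> set p" "Suc r \<notin> set p" "r \<notin> set q" "Suc r \<notin> set q" "r \<notin> set t" "Suc r \<notin> set t"
    using \<open>distinct w\<close> w by auto
  define F0 where "F0 = fold (place alpha j) p (\<lambda>_. None)"
  have F0_fixed: "map_option (transpose r (Suc r)) (F0 i) = F0 i" for i
    using fold_place_entries[of p "\<lambda>_. None" i] avoid(1,2) unfolding F0_def
    by (auto intro!: transpose_apply_other)
  have fill_w: "fill_column alpha w j = fold (place alpha j) t (fold (place alpha j) (r # q @ [Suc r]) F0)"
    by (simp add: fill_column_def w F0_def)
  have fill_w': "fill_column alpha (map (transpose r (Suc r)) w) j =
      fold (place alpha j) (map (transpose r (Suc r)) t) (fold (place alpha j) (Suc r # q @ [r]) F0)"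
    using avoid by (simp add: fill_column_def w F0_def map_transpose_eq_self)
  show thesis
  proof (cases "in_diagram alpha r j \<and> F0 r = None")
    case False
    then have "swap_related alpha j r id F0 F0"
      using F0_fixed by (auto simp: swap_related_def)
    from swap_related_fold[OF this, of "r # q @ Suc r # t"] show thesis
      using that avoid by (simp add: fill_column_def w F0_def map_transpose_eq_self)
  next
    case True
    with rows have "in_diagram alpha (Suc r) j"
      by simp
    moreover have "F0 (Suc r) = None"
      using fold_place_succ_row_empty[of r p "\<lambda>_. None"] True avoid(2) unfolding F0_def by simp
    ultimately have "swap_related alpha j r (transpose r (Suc r))
        (fold (place alpha j) (r # q @ [Suc r]) F0) (fold (place alpha j) (Suc r # q @ [r]) F0)"
      using True F0_fixed avoid(3,4) by (intro swap_related_fold_pair) auto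
    from swap_related_fold[OF this, of t] show thesis
      using that fill_w fill_w' by simp
  qed
qed

end

lemma card_filled_boxes_swap_related:
  assumes rel: "\<And>j. swap_related alpha j r (\<sigma> j) (G j) (G' j)"
  shows "card {(i, j). in_diagram alpha i j \<and> G j i = Some k} =
    card {(i, j). in_diagram alpha i j \<and> G' j i = Some (transpose r (Suc r) k)}"
proof (rule bij_betw_same_card)
  have inv: "\<sigma> j (\<sigma> j i) = i" for i j
    using rel by (simp add: swap_related_def)
  have G': "G' j (\<sigma> j i) = map_option (transpose r (Suc r)) (G j i)" for i j
    using rel by (simp add: swap_related_def)
  have G: "G j (\<sigma> j i) = map_option (transpose r (Suc r)) (G' j i)" for i j
    using G'[of j "\<sigma> j i"] by (simp add: inv option.map_comp comp_def option.map_ident)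
  show "bij_betw (\<lambda>(i, j). (\<sigma> j i, j))
      {(i, j). in_diagram alpha i j \<and> G j i = Some k}
      {(i, j). in_diagram alpha i j \<and> G' j i = Some (transpose r (Suc r) k)}"
    by (rule bij_betw_byWitness[where f' = "\<lambda>(i, j). (\<sigma> j i, j)"])
      (auto simp: inv G G' swap_related_in_diagram_iff[OF rel])
qed

theorem proposition4p4:
  fixes alpha w :: "nat list" and r :: nat
  assumes "length alpha = n"
    and "1 \<le> r" and "r \<le> n - 1"
    and "alpha ! (r - 1) < alpha ! r"
    and "is_perm n w"
    and "\<exists>a b. a < b \<and> b < length w \<and> w ! a = r \<and> w ! b = r + 1"
  shows "xvec alpha w = swap_entries (xvec alpha (swap_values r w)) r"
proof -
  obtain p q t where w: "w = p @ r # q @ Suc r # t"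
    using assms(6) split_list_at_two by (metis Suc_eq_plus1)
  have "distinct w"
    using assms(5) by (simp add: is_perm_def)
  have rows: "in_diagram alpha r j \<Longrightarrow> in_diagram alpha (Suc r) j" for j
    using assms(1-4) by (auto simp: in_diagram_def)
  have "\<exists>\<sigma>. swap_related alpha j r \<sigma> (fill_column alpha w j) (fill_column alpha (swap_values r w) j)"
    for j using fill_column_swap_related[OF w \<open>distinct w\<close>, of alpha j] rows
    unfolding swap_values_eq_map_transpose by blast
  then obtain \<sigma> where "\<And>j. swap_related alpha j r (\<sigma> j)
      (fill_column alpha w j) (fill_column alpha (swap_values r w) j)"
    by metis
  from card_filled_boxes_swap_related[OF this]
  have count: "card {(i, j). in_diagram alpha i j \<and> filling alpha w i j = Some k} =
      card {(i, j). in_diagram alpha i j \<and> filling alpha (swap_values r w) i j = Some (transpose r (Suc r) k)}"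
    for k unfolding filling_def .
  have "transpose (r - 1) r k < length alpha \<and> Suc (transpose (r - 1) r k) = transpose r (Suc r) (Suc k)"
    if "k < length alpha" for k
    using that assms(1-3) by (auto simp: transpose_def)
  with assms(1-3) show ?thesis
    by (intro nth_equalityI) (auto simp: nth_xvec nth_swap_entries count)
qed

end
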